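(* Let $X,Y\subseteq\{a,b\}^*$ be disjoint finite sets of words with $1\le|X|\le|Y|$. Then there is a $2^{|X|}$-state MCQFA (with complex amplitudes) that accepts every word of $X$ with probability $0$ and every word of $Y$ with nonzero probability; i.e. $X$ and $Y$ are separated by a nondeterministic MCQFA with $2^{|X|}$ states.
   Context: An $n$-state Moore–Crutchfield quantum finite automaton (MCQFA) over a finite alphabet $\Sigma$ consists of a unitary matrix $U_\sigma\in\mathbb{C}^{n\times n}$ for each $\sigma\in\Sigma$, an initial unit vector $|u_0\rangle\in\mathbb{C}^n$ and a set of accepting basis states; on input $w=w_1\cdots w_k$ the final state is $U_{w_k}\cdots U_{w_1}|u_0\rangle$ and the acceptance probability is the sum of the squared moduli of its accepting coordinates. Disjoint sets $X,Y$ are separated by a nondeterministic MCQFA if every word of one set is accepted with nonzero probability and every word of the other with probability $0$. *)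

theory Defs
  imports Complex_Main "Jordan_Normal_Form.Matrix"
begin

datatype sym = a | b

definition adjoint_mat :: "complex mat \<Rightarrow> complex mat" where
  "adjoint_mat U = transpose_mat (map_mat cnj U)"

definition unitary_mat :: "nat \<Rightarrow> complex mat \<Rightarrow> bool" where
  "unitary_mat n U \<longleftrightarrow> U \<in> carrier_mat n n \<and> adjoint_mat U * U = 1\<^sub>m n"

definition mcqfa_state :: "(sym \<Rightarrow> complex mat) \<Rightarrow> complex vec \<Rightarrow> sym list \<Rightarrow> complex vec" where
  "mcqfa_state U u0 w = foldl (\<lambda>v \<sigma>. U \<sigma> *\<^sub>v v) u0 w"

definition acc_prob :: "(sym \<Rightarrow> complex mat) \<Rightarrow> complex vec \<Rightarrow> nat set \<Rightarrow> sym list \<Rightarrow> real" where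
  "acc_prob U u0 F w = (\<Sum>i\<in>F. (cmod (mcqfa_state U u0 w $ i))\<^sup>2)"

definition is_mcqfa :: "nat \<Rightarrow> (sym \<Rightarrow> complex mat) \<Rightarrow> complex vec \<Rightarrow> nat set \<Rightarrow> bool" where
  "is_mcqfa n U u0 F \<longleftrightarrow> (\<forall>\<sigma>. unitary_mat n (U \<sigma>)) \<and> u0 \<in> carrier_vec n
     \<and> (\<Sum>i<n. (cmod (u0 $ i))\<^sup>2) = 1 \<and> F \<subseteq> {..<n}"

end

theory Submission
  imports Defs "HOL-Computational_Algebra.Polynomial"
begin

text \<open>For every x in X there is a 2-state automaton that gives x amplitude 0 in its accepting
state and every y in Y a nonzero amplitude; the tensor product of these |X| automata has
2^|X| states, and its accepting amplitude is the product of the component amplitudes.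

The 2-state automata use the Pythagorean matrices (1/5)[[3,4],[4,-3]] and (1/5)[[3,-4],[4,3]],
multiplied on the right by diag(1,z) with |z| = 1. The accepting row of the matrix of a word w
then consists of polynomials in z, and choosing the initial vector orthogonal to the row of x
makes the amplitude of y a 2x2 determinant D(y,x)(z). A common first letter contributes the
factor z * det, and after stripping the common prefix the coefficient of z in D(y,x) is visibly
nonzero, so D(y,x) is a nonzero polynomial for y \<noteq> x. Any z on the unit circle avoiding
the finitely many roots works.\<close>

text \<open>2-state automata are given by bool-indexed matrices and vectors; False is the accepting state.\<close>
definition unitary2 :: "(bool \<Rightarrow> bool \<Rightarrow> complex) \<Rightarrow> bool" where
  "unitary2 M \<longleftrightarrow> (\<forall>d d'. cnj (M False d) * M False d' + cnj (M True d) * M True d'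
                        = (if d = d' then 1 else 0))"

definition unit2 :: "(bool \<Rightarrow> complex) \<Rightarrow> bool" where
  "unit2 v \<longleftrightarrow> (cmod (v False))\<^sup>2 + (cmod (v True))\<^sup>2 = 1"

definition step2 :: "(bool \<Rightarrow> bool \<Rightarrow> complex) \<Rightarrow> (bool \<Rightarrow> complex) \<Rightarrow> bool \<Rightarrow> complex" where
  "step2 M v i = M i False * v False + M i True * v True"

definition run2 :: "(sym \<Rightarrow> bool \<Rightarrow> bool \<Rightarrow> complex) \<Rightarrow> (bool \<Rightarrow> complex) \<Rightarrow> sym list \<Rightarrow> bool \<Rightarrow> complex" where
  "run2 A v w = foldl (\<lambda>u s. step2 (A s) u) v w"

text \<open>Row False of the product A(w_k) \<dots> A(w_1).\<close>
fun first_row :: "(sym \<Rightarrow> bool \<Rightarrow> bool \<Rightarrow> complex) \<Rightarrow> sym list \<Rightarrow> bool \<Rightarrow> complex" where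
  "first_row A [] j = (if j then 0 else 1)"
| "first_row A (s # w) j = first_row A w False * A s False j + first_row A w True * A s True j"

lemma run2_False:
  "run2 A v w False = first_row A w False * v False + first_row A w True * v True"
proof (induction w arbitrary: v)
  case Nil
  then show ?case by (simp add: run2_def)
next
  case (Cons s w)
  then show ?case by (simp add: run2_def step2_def algebra_simps)
qed

definition pyth_mat :: "sym \<Rightarrow> bool \<Rightarrow> bool \<Rightarrow> complex" where
  "pyth_mat s i j = (case s of
      a \<Rightarrow> if i \<and> j then -3 else if i \<or> j then 4 else 3
    | b \<Rightarrow> if i = j then 3 else if j then -4 else 4)"

definition twisted_mat :: "complex \<Rightarrow> sym \<Rightarrow> bool \<Rightarrow> bool \<Rightarrow> complex" where
  "twisted_mat z s i j = pyth_mat s i j * (if j then z else 1) / 5"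

lemma unitary2_twisted_mat:
  assumes "cmod z = 1"
  shows "unitary2 (twisted_mat z s)"
proof -
  have "cnj z * z = 1" "z * cnj z = 1"
    using assms by (simp_all add: complex_norm_square[symmetric] mult.commute)
  moreover have "cnj (pyth_mat s i j) = pyth_mat s i j" for i j
    by (cases s) (auto simp: pyth_mat_def)
  ultimately show ?thesis
    by (cases s) (auto simp: unitary2_def twisted_mat_def pyth_mat_def)
qed

fun row_poly :: "sym list \<Rightarrow> bool \<Rightarrow> complex poly" where
  "row_poly [] j = (if j then 0 else 1)"
| "row_poly (s # w) j =
     (let p = smult (pyth_mat s False j) (row_poly w False) + smult (pyth_mat s True j) (row_poly w True)
      in if j then pCons 0 p else p)"

lemma first_row_twisted_mat:
  "first_row (twisted_mat z) w j = poly (row_poly w j) z / 5 ^ length w"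
  by (induction w arbitrary: j) (auto simp: twisted_mat_def field_simps)

definition cross_poly :: "sym list \<Rightarrow> sym list \<Rightarrow> complex poly" where
  "cross_poly y x = row_poly y False * row_poly x True - row_poly y True * row_poly x False"

lemma coeff_row_poly_True_0: "coeff (row_poly w True) 0 = 0"
  by (cases w) auto

lemma coeff_row_poly_False_0: "coeff (row_poly w False) 0 = 3 ^ length w"
  by (induction w) (auto simp: coeff_row_poly_True_0 pyth_mat_def split: sym.splits)

lemma coeff_row_poly_True_1:
  "coeff (row_poly (s # w) True) 1 = pyth_mat s False True * 3 ^ length w"
  by (simp add: coeff_row_poly_True_0 coeff_row_poly_False_0)

lemma coeff_cross_poly_1:
  "coeff (cross_poly y x) 1
     = 3 ^ length y * coeff (row_poly x True) 1 - coeff (row_poly y True) 1 * 3 ^ length x"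
  by (simp add: cross_poly_def coeff_mult coeff_row_poly_True_0 coeff_row_poly_False_0)

lemma cross_poly_Cons_Cons:
  "cross_poly (s # y) (s # x) = pCons 0 (smult
     (pyth_mat s False False * pyth_mat s True True - pyth_mat s False True * pyth_mat s True False)
     (cross_poly y x))"
  by (rule poly_eq_poly_eq_iff[THEN iffD1]) (auto simp: cross_poly_def algebra_simps)

lemma cross_poly_nonzero:
  assumes "x \<noteq> y"
  shows "cross_poly y x \<noteq> 0"
  using assms
proof (induction x y rule: list_induct2')
  case 1
  then show ?case by simp
next
  case (2 s x)
  have "coeff (cross_poly [] (s # x)) 1 \<noteq> 0"
    unfolding coeff_cross_poly_1 coeff_row_poly_True_1 by (cases s) (simp_all add: pyth_mat_def)
  then show ?case by auto
next
  case (3 t y)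
  have "coeff (cross_poly (t # y) []) 1 \<noteq> 0"
    unfolding coeff_cross_poly_1 coeff_row_poly_True_1 by (cases t) (simp_all add: pyth_mat_def)
  then show ?case by auto
next
  case (4 s x t y)
  show ?case
  proof (cases "s = t")
    case True
    with 4 have "cross_poly y x \<noteq> 0" by simp
    then show ?thesis
      using True by (cases s) (simp_all add: cross_poly_Cons_Cons pyth_mat_def)
  next
    case False
    then have "pyth_mat s False True \<noteq> pyth_mat t False True"
      by (cases s; cases t) (auto simp: pyth_mat_def)
    then have "coeff (cross_poly (t # y) (s # x)) 1 \<noteq> 0"
      unfolding coeff_cross_poly_1 coeff_row_poly_True_1 by (simp add: algebra_simps)
    then show ?thesis by auto
  qed
qed

text \<open>The Cayley transform maps the naturals injectively into the unit circle.\<close>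
lemma ex_unit_complex_notin_finite:
  fixes R :: "complex set"
  assumes "finite R"
  obtains z where "cmod z = 1" "z \<notin> R"
proof -
  define c :: "nat \<Rightarrow> complex" where "c n = (of_nat n + \<i>) / (of_nat n - \<i>)" for n
  have c_unit: "cmod (c n) = 1" for n
  proof -
    have "cmod (of_nat n - \<i>) = cmod (of_nat n + \<i>)"
      by (metis complex_cnj_add complex_cnj_i complex_cnj_of_nat complex_mod_cnj diff_conv_add_uminus)
    moreover have "of_nat n + \<i> \<noteq> 0" by (simp add: complex_eq_iff)
    ultimately show ?thesis by (simp add: c_def norm_divide)
  qed
  have "inj c"
  proof (rule injI)
    fix m n
    assume "c m = c n"
    moreover have "of_nat m - \<i> \<noteq> 0" "of_nat n - \<i> \<noteq> 0" by (simp_all add: complex_eq_iff)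
    ultimately have "(of_nat m + \<i>) * (of_nat n - \<i>) = (of_nat n + \<i>) * (of_nat m - \<i>)"
      by (simp add: c_def field_simps)
    then show "m = n" by (simp add: algebra_simps complex_eq_iff)
  qed
  then have "\<not> range c \<subseteq> R"
    using assms range_inj_infinite finite_subset by blast
  then obtain n where "c n \<notin> R"
    by blast
  then show ?thesis
    using c_unit that by blast
qed

definition separates2 :: "(sym \<Rightarrow> bool \<Rightarrow> bool \<Rightarrow> complex) \<Rightarrow> (bool \<Rightarrow> complex) \<Rightarrow> sym list \<Rightarrow> sym list set \<Rightarrow> bool" where
  "separates2 A v x S \<longleftrightarrow> (\<forall>s. unitary2 (A s)) \<and> unit2 v
     \<and> run2 A v x False = 0 \<and> (\<forall>y\<in>S. run2 A v y False \<noteq> 0)"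

lemma ex_separates2:
  assumes "finite S" "x \<notin> S"
  shows "\<exists>A v. separates2 A v x S"
proof -
  define R where "R = {z. poly (row_poly x False) z = 0} \<union> (\<Union>y\<in>S. {z. poly (cross_poly y x) z = 0})"
  \<comment> \<open>Avoiding the roots of row_poly x False keeps the row of x nonzero, so it has a unit normal v.\<close>
  have "row_poly x False \<noteq> 0"
    using coeff_row_poly_False_0[of x] by auto
  moreover have "cross_poly y x \<noteq> 0" if "y \<in> S" for y
    using assms(2) that by (intro cross_poly_nonzero) auto
  ultimately have "finite R"
    using assms(1) by (auto simp: R_def intro: poly_roots_finite)
  then obtain z where z: "cmod z = 1" "z \<notin> R"
    by (rule ex_unit_complex_notin_finite)
  define A where "A = twisted_mat z"
  define r where "r = first_row A x"
  define n where "n = sqrt ((cmod (r False))\<^sup>2 + (cmod (r True))\<^sup>2)"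
  define v where "v d = (if d then - r False else r True) / n" for d
  have "r False \<noteq> 0"
    using z(2) by (simp add: R_def r_def A_def first_row_twisted_mat)
  then have "n > 0"
    by (simp add: n_def add_pos_nonneg)
  have run: "run2 A v y False = (first_row A y False * r True - first_row A y True * r False) / n" for y
    by (simp add: run2_False v_def diff_divide_distrib)
  have "unit2 v"
    using \<open>r False \<noteq> 0\<close> by (simp add: unit2_def v_def n_def norm_divide power_divide add_divide_distrib[symmetric] add.commute)
  moreover have "run2 A v y False \<noteq> 0" if "y \<in> S" for y
  proof -
    have "first_row A y False * r True - first_row A y True * r False
          = poly (cross_poly y x) z / (5 ^ length y * 5 ^ length x)"
      by (simp add: A_def r_def first_row_twisted_mat cross_poly_def diff_divide_distrib)
    then show ?thesis
      using z(2) that \<open>n > 0\<close> by (simp add: R_def run)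
  qed
  moreover have "run2 A v x False = 0"
    by (simp add: run r_def)
  moreover have "\<forall>s. unitary2 (A s)"
    using unitary2_twisted_mat[OF z(1)] by (simp add: A_def)
  ultimately show ?thesis
    unfolding separates2_def by blast
qed

text \<open>Basis state i of the k-fold tensor product stands for the bit string
(bit i 0, \<dots>, bit i (k - 1)) of component states.\<close>
definition tensor_mat :: "nat \<Rightarrow> (nat \<Rightarrow> sym \<Rightarrow> bool \<Rightarrow> bool \<Rightarrow> complex) \<Rightarrow> sym \<Rightarrow> complex mat" where
  "tensor_mat k A s = mat (2 ^ k) (2 ^ k) (\<lambda>(i, l). \<Prod>j<k. A j s (bit i j) (bit l j))"

definition tensor_vec :: "nat \<Rightarrow> (nat \<Rightarrow> bool \<Rightarrow> complex) \<Rightarrow> complex vec" where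
  "tensor_vec k v = vec (2 ^ k) (\<lambda>i. \<Prod>j<k. v j (bit i j))"

lemma tensor_vec_carrier [simp]: "tensor_vec k v \<in> carrier_vec (2 ^ k)"
  by (simp add: tensor_vec_def)

lemma sum_pow2_prod_bit:
  fixes h :: "nat \<Rightarrow> bool \<Rightarrow> 'a::comm_semiring_1"
  shows "(\<Sum>i<(2::nat) ^ k. \<Prod>j<k. h j (bit i j)) = (\<Prod>j<k. h j False + h j True)"
proof (induction k arbitrary: h)
  case 0
  then show ?case by simp
next
  case (Suc k)
  define G where "G i = (\<Prod>j<Suc k. h j (bit i j))" for i :: nat
  define m :: nat where "m = 2 ^ k - 1"
  have "2 ^ k = Suc m"
    by (simp add: m_def)
  then have range: "{..<(2::nat) ^ Suc k} = {..Suc (2 * m)}" "{..m} = {..<(2::nat) ^ k}"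
    by auto
  have pair: "G (2 * i) + G (Suc (2 * i)) = (h 0 False + h 0 True) * (\<Prod>j<k. h (Suc j) (bit i j))" for i
    unfolding G_def prod.lessThan_Suc_shift by (simp add: bit_Suc bit_0 algebra_simps)
  have "(\<Sum>i<(2::nat) ^ Suc k. G i) = (\<Sum>i\<le>m. G (2 * i) + G (Suc (2 * i)))"
    unfolding range(1) by (rule sum.in_pairs_0)
  also have "\<dots> = (h 0 False + h 0 True) * (\<Sum>i<(2::nat) ^ k. \<Prod>j<k. h (Suc j) (bit i j))"
    unfolding pair range(2) by (simp add: sum_distrib_left)
  also have "\<dots> = (\<Prod>j<Suc k. h j False + h j True)"
    unfolding prod.lessThan_Suc_shift Suc.IH[of "\<lambda>j. h (Suc j)"] ..
  finally show ?case
    unfolding G_def .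
qed

lemma nat_eq_if_low_bits_eq:
  fixes i i' :: nat
  assumes "i < 2 ^ k" "i' < 2 ^ k" "\<And>j. j < k \<Longrightarrow> bit i j = bit i' j"
  shows "i = i'"
proof -
  have "take_bit k i = take_bit k i'"
    using assms(3) by (intro bit_eqI) (auto simp: bit_take_bit_iff)
  then show ?thesis
    using assms(1,2) by (simp add: take_bit_nat_eq_self)
qed

lemma mcqfa_state_tensor:
  "mcqfa_state (tensor_mat k A) (tensor_vec k v) w = tensor_vec k (\<lambda>j. run2 (A j) (v j) w)"
proof (induction w rule: rev_induct)
  case Nil
  show ?case by (simp add: mcqfa_state_def run2_def)
next
  case (snoc s w)
  have entry: "(tensor_mat k A s *\<^sub>v tensor_vec k (\<lambda>j. run2 (A j) (v j) w)) $ i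
      = tensor_vec k (\<lambda>j. run2 (A j) (v j) (w @ [s])) $ i" if "i < 2 ^ k" for i
  proof -
    have "(tensor_mat k A s *\<^sub>v tensor_vec k (\<lambda>j. run2 (A j) (v j) w)) $ i
        = (\<Sum>l<(2::nat) ^ k. \<Prod>j<k. A j s (bit i j) (bit l j) * run2 (A j) (v j) w (bit l j))"
      using that by (simp add: tensor_mat_def tensor_vec_def scalar_prod_def atLeast0LessThan prod.distrib)
    also have "\<dots> = (\<Prod>j<k. A j s (bit i j) False * run2 (A j) (v j) w False
                          + A j s (bit i j) True * run2 (A j) (v j) w True)"
      by (rule sum_pow2_prod_bit)
    finally show ?thesis
      using that by (simp add: tensor_vec_def run2_def step2_def)
  qed
  then have "tensor_mat k A s *\<^sub>v tensor_vec k (\<lambda>j. run2 (A j) (v j) w)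
      = tensor_vec k (\<lambda>j. run2 (A j) (v j) (w @ [s]))"
    by (intro eq_vecI) (simp_all add: tensor_mat_def tensor_vec_def)
  then show ?case
    using snoc.IH by (simp add: mcqfa_state_def)
qed

lemma unitary_tensor_mat:
  assumes "\<And>j. j < k \<Longrightarrow> unitary2 (A j s)"
  shows "unitary_mat (2 ^ k) (tensor_mat k A s)"
  unfolding unitary_mat_def
proof
  show "tensor_mat k A s \<in> carrier_mat (2 ^ k) (2 ^ k)"
    by (simp add: tensor_mat_def)
  have "(adjoint_mat (tensor_mat k A s) * tensor_mat k A s) $$ (i, i') = 1\<^sub>m (2 ^ k) $$ (i, i')"
    if i: "i < 2 ^ k" and i': "i' < 2 ^ k" for i i'
  proof -
    have "(adjoint_mat (tensor_mat k A s) * tensor_mat k A s) $$ (i, i')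
        = (\<Sum>l<(2::nat) ^ k. \<Prod>j<k. cnj (A j s (bit l j) (bit i j)) * A j s (bit l j) (bit i' j))"
      using i i' by (simp add: adjoint_mat_def tensor_mat_def scalar_prod_def atLeast0LessThan prod.distrib)
    also have "\<dots> = (\<Prod>j<k. cnj (A j s False (bit i j)) * A j s False (bit i' j)
                          + cnj (A j s True (bit i j)) * A j s True (bit i' j))"
      by (rule sum_pow2_prod_bit[where h = "\<lambda>j c. cnj (A j s c (bit i j)) * A j s c (bit i' j)"])
    also have "\<dots> = (\<Prod>j<k. if bit i j = bit i' j then 1 else 0)"
      using assms by (intro prod.cong) (auto simp: unitary2_def)
    also have "\<dots> = (if i = i' then 1 else 0)"
      using nat_eq_if_low_bits_eq[OF i i'] by auto
    finally show ?thesis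
      using i i' by simp
  qed
  then show "adjoint_mat (tensor_mat k A s) * tensor_mat k A s = 1\<^sub>m (2 ^ k)"
    by (intro eq_matI) (simp_all add: adjoint_mat_def tensor_mat_def)
qed

lemma tensor_vec_unit:
  assumes "\<And>j. j < k \<Longrightarrow> unit2 (v j)"
  shows "(\<Sum>i<(2::nat) ^ k. (cmod (tensor_vec k v $ i))\<^sup>2) = 1"
proof -
  have "(\<Sum>i<(2::nat) ^ k. (cmod (tensor_vec k v $ i))\<^sup>2) = (\<Sum>i<(2::nat) ^ k. \<Prod>j<k. (cmod (v j (bit i j)))\<^sup>2)"
    by (intro sum.cong) (auto simp: tensor_vec_def prod_norm[symmetric] prod_power_distrib)
  also have "\<dots> = (\<Prod>j<k. (cmod (v j False))\<^sup>2 + (cmod (v j True))\<^sup>2)"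
    by (rule sum_pow2_prod_bit)
  also have "\<dots> = 1"
    using assms by (simp add: unit2_def)
  finally show ?thesis .
qed

lemma acc_prob_tensor:
  "acc_prob (tensor_mat k A) (tensor_vec k v) {0} w = (cmod (\<Prod>j<k. run2 (A j) (v j) w False))\<^sup>2"
  unfolding acc_prob_def mcqfa_state_tensor by (simp add: tensor_vec_def)

theorem mainTheorem15:
  fixes X Y :: "sym list set"
  assumes "finite X" and "finite Y" and "X \<inter> Y = {}"
    and "1 \<le> card X" and "card X \<le> card Y"
  shows "\<exists>U u0 F. is_mcqfa (2 ^ card X) U u0 F
           \<and> (\<forall>w\<in>X. acc_prob U u0 F w = 0)
           \<and> (\<forall>w\<in>Y. acc_prob U u0 F w \<noteq> 0)"
proof -
  define k where "k = card X"
  obtain h where h: "bij_betw h {..<k} X"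
    using ex_bij_betw_nat_finite[OF assms(1)] by (auto simp: k_def atLeast0LessThan)
  have "\<forall>j<k. \<exists>A v. separates2 A v (h j) Y"
    using h assms(2,3) by (intro allI impI ex_separates2) (auto dest: bij_betwE)
  then obtain A v where sep: "\<And>j. j < k \<Longrightarrow> separates2 (A j) (v j) (h j) Y"
    by metis
  have "is_mcqfa (2 ^ k) (tensor_mat k A) (tensor_vec k v) {0}"
    using sep by (auto simp: is_mcqfa_def separates2_def intro!: unitary_tensor_mat tensor_vec_unit)
  moreover have "acc_prob (tensor_mat k A) (tensor_vec k v) {0} x = 0" if x: "x \<in> X" for x
  proof -
    obtain j where "j < k" "x = h j"
      using h x by (auto simp: bij_betw_def)
    then show ?thesis
      using sep[of j] by (auto simp: acc_prob_tensor separates2_def prod_zero_iff)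
  qed
  moreover have "acc_prob (tensor_mat k A) (tensor_vec k v) {0} y \<noteq> 0" if "y \<in> Y" for y
    using sep that by (simp add: acc_prob_tensor separates2_def prod_zero_iff)
  ultimately show ?thesis
    unfolding k_def by blast
qed

end
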